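(* Let $A$ be a commutative noetherian local ring, let $x,y\in A$ be an exact pair of zero divisors, and let $a\in A$. (a) If $a$ is a unit, then $G_a\cong H_a\cong A$. (b) If $a$ is not a unit, then neither $G_a$ nor $H_a$ is a free $A$-module.
   Context: Two non-units $x,y\in A$ form an exact pair of zero divisors if $\operatorname{Ann}_A(x)=(y)$ and $\operatorname{Ann}_A(y)=(x)$. For $a\in A$, let $\gamma_a=\begin{pmatrix} x & a\\ 0 & y\end{pmatrix}$ and $\eta_a=\begin{pmatrix} y & -a\\ 0 & x\end{pmatrix}$, viewed as $A$-linear maps $A^2\to A^2$ acting on column vectors, and set $G_a=\operatorname{Coker}\gamma_a$, $H_a=\operatorname{Coker}\eta_a$. *)

theory Defs
  imports Main
begin

definition ring_ideal :: "'a::comm_ring_1 set \<Rightarrow> bool" where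
  "ring_ideal I \<longleftrightarrow> 0 \<in> I \<and> (\<forall>a\<in>I. \<forall>b\<in>I. a + b \<in> I) \<and> (\<forall>a\<in>I. \<forall>r. r * a \<in> I)"

definition maximal_ideal :: "'a::comm_ring_1 set \<Rightarrow> bool" where
  "maximal_ideal m \<longleftrightarrow> ring_ideal m \<and> m \<noteq> UNIV \<and>
     (\<forall>J. ring_ideal J \<and> m \<subseteq> J \<longrightarrow> J = m \<or> J = UNIV)"

definition gen_ideal :: "'a::comm_ring_1 set \<Rightarrow> 'a set" where
  "gen_ideal F = {\<Sum>f\<in>F. r f * f | r. True}"

definition noetherian_ring :: "'a::comm_ring_1 itself \<Rightarrow> bool" where
  "noetherian_ring _ \<longleftrightarrow> (\<forall>I::'a set. ring_ideal I \<longrightarrow> (\<exists>F. finite F \<and> F \<subseteq> I \<and> I = gen_ideal F))"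

definition local_ring :: "'a::comm_ring_1 itself \<Rightarrow> bool" where
  "local_ring _ \<longleftrightarrow> (\<exists>!m::'a set. maximal_ideal m)"

definition is_unit :: "'a::comm_ring_1 \<Rightarrow> bool" where
  "is_unit u \<longleftrightarrow> u dvd 1"

definition ann :: "'a::comm_ring_1 \<Rightarrow> 'a set" where
  "ann x = {z. x * z = 0}"

definition principal :: "'a::comm_ring_1 \<Rightarrow> 'a set" where
  "principal y = {y * r | r. True}"

definition exact_pair :: "'a::comm_ring_1 \<Rightarrow> 'a \<Rightarrow> bool" where
  "exact_pair x y \<longleftrightarrow> \<not> is_unit x \<and> \<not> is_unit y \<and>
     ann x = principal y \<and> ann y = principal x"

(* A^2 is represented as 'a \<times> 'a (column vectors (u,v)).
   gamma_a = [[x, a], [0, y]], eta_a = [[y, -a], [0, x]] acting on columns. *)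
definition gamma_map :: "'a::comm_ring_1 \<Rightarrow> 'a \<Rightarrow> 'a \<Rightarrow> 'a \<times> 'a \<Rightarrow> 'a \<times> 'a" where
  "gamma_map x y a = (\<lambda>(u, v). (x * u + a * v, y * v))"

definition eta_map :: "'a::comm_ring_1 \<Rightarrow> 'a \<Rightarrow> 'a \<Rightarrow> 'a \<times> 'a \<Rightarrow> 'a \<times> 'a" where
  "eta_map x y a = (\<lambda>(u, v). (y * u - a * v, x * v))"

(* The cokernel of a map \<phi> : A^2 \<rightarrow> A^2 is the quotient module A^2 / M with M = range \<phi>.
   "A^2/M \<cong> A": there is an A-linear surjection A^2 \<rightarrow> A with kernel exactly M
   (first isomorphism theorem). *)
definition quot_iso_ring :: "('a::comm_ring_1 \<times> 'a) set \<Rightarrow> bool" where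
  "quot_iso_ring M \<longleftrightarrow> (\<exists>f :: 'a \<times> 'a \<Rightarrow> 'a.
      (\<forall>u1 v1 u2 v2. f (u1 + u2, v1 + v2) = f (u1, v1) + f (u2, v2)) \<and>
      (\<forall>r u v. f (r * u, r * v) = r * f (u, v)) \<and>
      surj f \<and> {p. f p = 0} = M)"

(* A^2/M is a free A-module: there is a family B of elements of A^2 whose classes
   form a basis of A^2/M (linearly independent modulo M, and spanning modulo M). *)
definition lin_comb :: "('a \<times> 'a \<Rightarrow> 'a::comm_ring_1) \<Rightarrow> ('a \<times> 'a) set \<Rightarrow> 'a \<times> 'a" where
  "lin_comb c S = ((\<Sum>b\<in>S. c b * fst b), (\<Sum>b\<in>S. c b * snd b))"

definition quot_free :: "('a::comm_ring_1 \<times> 'a) set \<Rightarrow> bool" where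
  "quot_free M \<longleftrightarrow> (\<exists>B :: ('a \<times> 'a) set.
      (\<forall>S c. finite S \<and> S \<subseteq> B \<and> lin_comb c S \<in> M \<longrightarrow> (\<forall>b\<in>S. c b = 0)) \<and>
      (\<forall>u v. \<exists>S c. finite S \<and> S \<subseteq> B \<and>
          (u - fst (lin_comb c S), v - snd (lin_comb c S)) \<in> M))"

definition G_mod :: "'a::comm_ring_1 \<Rightarrow> 'a \<Rightarrow> 'a \<Rightarrow> ('a \<times> 'a) set" where
  "G_mod x y a = range (gamma_map x y a)"

definition H_mod :: "'a::comm_ring_1 \<Rightarrow> 'a \<Rightarrow> 'a \<Rightarrow> ('a \<times> 'a) set" where
  "H_mod x y a = range (eta_map x y a)"

end

theory Submission
  imports Defs
begin

text \<open>
  Since \<open>\<eta>\<^sub>a\<close> is the map \<open>\<gamma>\<close> of the exact pair \<open>(y, x)\<close> at \<open>-a\<close>, it suffices to treat \<open>G\<^sub>a\<close>.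
  If \<open>a\<close> is a unit, the row \<open>(y, -a)\<close> maps \<open>A\<^sup>2\<close> onto \<open>A\<close> with kernel exactly the
  column span of \<open>\<gamma>\<^sub>a\<close>, because \<open>xy = 0\<close>. If \<open>a\<close> is not a unit and \<open>G\<^sub>a\<close> were free, write
  the class of \<open>e\<^sub>1\<close> in a basis: \<open>e\<^sub>1 - \<Sum> c\<^sub>b b = \<gamma>\<^sub>a(u, v)\<close>. Multiplying by \<open>x\<close> lands in the
  image of \<open>\<gamma>\<^sub>a\<close>, so every \<open>x c\<^sub>b\<close> vanishes, hence every \<open>c\<^sub>b\<close> lies in \<open>Ann x = (y)\<close>. Then
  \<open>1 = (\<Sum> c\<^sub>b b)\<^sub>1 + xu + av\<close> is a sum of non-units, impossible in a local ring.
\<close>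

lemma mem_principal_iff_dvd: "w \<in> principal z \<longleftrightarrow> z dvd w"
  by (auto simp: principal_def dvd_def)

lemma ring_ideal_principal: "ring_ideal (principal z)"
  by (auto simp: ring_ideal_def mem_principal_iff_dvd)

lemma ring_ideal_eq_UNIV_iff_one:
  assumes "ring_ideal I"
  shows "I = UNIV \<longleftrightarrow> (1::'a::comm_ring_1) \<in> I"
proof
  assume "1 \<in> I"
  then have "r * 1 \<in> I" for r :: 'a
    using assms unfolding ring_ideal_def by blast
  then show "I = UNIV" by auto
qed simp

lemma ring_ideal_Union_chain:
  assumes "C \<noteq> {}" "\<forall>I\<in>C. ring_ideal I" "chain\<^sub>\<subseteq> C"
  shows "ring_ideal (\<Union>C)"
  unfolding ring_ideal_def
proof (intro conjI ballI allI)
  show "0 \<in> \<Union>C"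
    using assms(1,2) by (auto simp: ring_ideal_def)
next
  fix p q assume "p \<in> \<Union>C" "q \<in> \<Union>C"
  then obtain I J where "I \<in> C" "J \<in> C" "p \<in> I" "q \<in> J" by blast
  moreover from \<open>I \<in> C\<close> \<open>J \<in> C\<close> have "I \<subseteq> J \<or> J \<subseteq> I"
    using assms(3) by (auto simp: chain_subset_def)
  ultimately show "p + q \<in> \<Union>C"
    using assms(2) unfolding ring_ideal_def by blast
next
  fix p r assume "p \<in> \<Union>C"
  then show "r * p \<in> \<Union>C"
    using assms(2) unfolding ring_ideal_def by blast
qed

lemma ring_ideal_in_maximal_ideal:
  fixes I :: "'a::comm_ring_1 set"
  assumes "ring_ideal I" "I \<noteq> UNIV"
  obtains m where "maximal_ideal m" "I \<subseteq> m"
proof -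
  define P where "P = {J. ring_ideal J \<and> I \<subseteq> J \<and> (1::'a) \<notin> J}"
  have "\<forall>C\<in>chains P. \<exists>U\<in>P. \<forall>J\<in>C. J \<subseteq> U"
  proof
    fix C assume chain: "C \<in> chains P"
    show "\<exists>U\<in>P. \<forall>J\<in>C. J \<subseteq> U"
    proof (cases "C = {}")
      case True
      then show ?thesis
        using assms ring_ideal_eq_UNIV_iff_one by (auto simp: P_def)
    next
      case False
      from chain have C: "C \<subseteq> P" "chain\<^sub>\<subseteq> C" by (auto simp: chains_def)
      then have "ring_ideal (\<Union>C)"
        using False by (intro ring_ideal_Union_chain) (auto simp: P_def)
      with C(1) False have "\<Union>C \<in> P" by (auto simp: P_def)
      then show ?thesis by blast
    qed
  qed
  from Zorn_Lemma2[OF this] obtain m where m: "m \<in> P" and max: "\<forall>J\<in>P. m \<subseteq> J \<longrightarrow> J = m"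
    by blast
  have "maximal_ideal m"
    unfolding maximal_ideal_def
  proof (intro conjI allI impI)
    show "ring_ideal m" "m \<noteq> UNIV" using m by (auto simp: P_def)
  next
    fix J assume J: "ring_ideal J \<and> m \<subseteq> J"
    show "J = m \<or> J = UNIV"
    proof (cases "1 \<in> J")
      case True
      then show ?thesis using J ring_ideal_eq_UNIV_iff_one by blast
    next
      case False
      then have "J \<in> P" using J m by (auto simp: P_def)
      then show ?thesis using max J by blast
    qed
  qed
  with m show ?thesis using that by (auto simp: P_def)
qed

lemma local_ring_nonunit_in_maximal_ideal:
  fixes z :: "'a::comm_ring_1"
  assumes "local_ring TYPE('a)" "maximal_ideal m" "\<not> is_unit z"
  shows "z \<in> m"
proof -
  have "principal z \<noteq> UNIV"
    using assms(3) by (auto simp: is_unit_def mem_principal_iff_dvd)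
  then obtain m' where "maximal_ideal m'" "principal z \<subseteq> m'"
    using ring_ideal_in_maximal_ideal ring_ideal_principal by blast
  moreover have "m' = m"
    using assms(1,2) \<open>maximal_ideal m'\<close> by (auto simp: local_ring_def)
  ultimately show ?thesis by (auto simp: mem_principal_iff_dvd)
qed

lemma local_ring_nonunit_add:
  fixes p q :: "'a::comm_ring_1"
  assumes "local_ring TYPE('a)" "\<not> is_unit p" "\<not> is_unit q"
  shows "\<not> is_unit (p + q)"
proof
  assume "is_unit (p + q)"
  then obtain r where r: "1 = (p + q) * r"
    by (auto simp: is_unit_def elim: dvdE)
  obtain m :: "'a set" where m: "maximal_ideal m"
    using assms(1) by (auto simp: local_ring_def)
  then have "ring_ideal m" "m \<noteq> UNIV" by (simp_all add: maximal_ideal_def)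
  moreover have "p \<in> m" "q \<in> m"
    using local_ring_nonunit_in_maximal_ideal assms m by blast+
  ultimately have "r * (p + q) \<in> m" by (simp add: ring_ideal_def)
  then show False
    using r ring_ideal_eq_UNIV_iff_one[OF \<open>ring_ideal m\<close>] \<open>m \<noteq> UNIV\<close> by (simp add: mult.commute)
qed

lemma nonunit_mult: "\<not> is_unit p \<Longrightarrow> \<not> is_unit (p * r)"
  by (auto simp: is_unit_def intro: dvd_mult_left)

lemma ann_eq_principal_mult_eq_0:
  assumes "ann x = principal y"
  shows "x * y = 0"
proof -
  have "y \<in> ann x"
    unfolding assms mem_principal_iff_dvd by simp
  then show ?thesis by (simp add: ann_def)
qed

lemma H_mod_eq_G_mod: "H_mod x y a = G_mod y x (- a)"
  by (simp add: H_mod_def G_mod_def eta_map_def gamma_map_def)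

lemma quot_iso_ring_G_mod:
  fixes x y a :: "'a::comm_ring_1"
  assumes xy: "x * y = 0" and "is_unit a"
  shows "quot_iso_ring (G_mod x y a)"
proof -
  obtain b where ab: "a * b = 1"
    using \<open>is_unit a\<close> by (auto simp: is_unit_def elim!: dvdE)
  define f where "f = (\<lambda>(p, q). y * p - a * q)"
  have "pq \<in> G_mod x y a" if "f pq = 0" for pq
  proof (cases pq)
    case (Pair p q)
    with that have "y * p = a * q" by (simp add: f_def)
    then have "q = y * (b * p)"
      using ab by (metis mult.assoc mult.commute mult_1)
    moreover have "p = a * (b * p)"
      using ab by (simp add: mult.assoc[symmetric])
    ultimately have "pq = gamma_map x y a (0, b * p)"
      using Pair by (simp add: gamma_map_def)
    then show ?thesis by (simp add: G_mod_def)
  qed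
  moreover have "f (gamma_map x y a uv) = 0" for uv
    using xy by (cases uv) (simp add: f_def gamma_map_def algebra_simps)
  ultimately have "{pq. f pq = 0} = G_mod x y a"
    by (auto simp: G_mod_def)
  moreover have "surj f"
  proof (rule surjI)
    show "f (0, - b * r) = r" for r
      using ab by (simp add: f_def mult.assoc[symmetric])
  qed
  ultimately show ?thesis
    unfolding quot_iso_ring_def by (intro exI[of _ f]) (auto simp: f_def algebra_simps)
qed

lemma lin_comb_mult: "(z * fst (lin_comb c S), z * snd (lin_comb c S)) = lin_comb (\<lambda>b. z * c b) S"
  by (simp add: lin_comb_def sum_distrib_left mult.assoc)

lemma independent_coeffs_annihilated:
  assumes indep: "\<forall>S c. finite S \<and> S \<subseteq> B \<and> lin_comb c S \<in> M \<longrightarrow> (\<forall>b\<in>S. c b = 0)"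
    and "finite S" "S \<subseteq> B"
    and "(z * fst (lin_comb c S), z * snd (lin_comb c S)) \<in> M"
    and "b \<in> S"
  shows "z * c b = 0"
  using indep[rule_format, of S "\<lambda>b. z * c b"] assms(2-) by (simp add: lin_comb_mult)

lemma not_quot_free_G_mod:
  fixes x y a :: "'a::comm_ring_1"
  assumes "local_ring TYPE('a)" and ann: "ann x = principal y"
    and "\<not> is_unit x" "\<not> is_unit y" "\<not> is_unit a"
  shows "\<not> quot_free (G_mod x y a)"
proof
  assume "quot_free (G_mod x y a)"
  then obtain B where
    indep: "\<forall>S c. finite S \<and> S \<subseteq> B \<and> lin_comb c S \<in> G_mod x y a \<longrightarrow> (\<forall>b\<in>S. c b = 0)" and
    span: "\<forall>u v. \<exists>S c. finite S \<and> S \<subseteq> B \<and>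
      (u - fst (lin_comb c S), v - snd (lin_comb c S)) \<in> G_mod x y a"
    unfolding quot_free_def by (elim exE conjE)
  from span[rule_format, of 1 0] obtain S c where S: "finite S" "S \<subseteq> B"
    and "(1 - fst (lin_comb c S), 0 - snd (lin_comb c S)) \<in> G_mod x y a"
    by (elim exE conjE)
  then obtain u v where uv: "(1 - fst (lin_comb c S), - snd (lin_comb c S)) = gamma_map x y a (u, v)"
    by (auto simp: G_mod_def)
  define L where "L = lin_comb c S"
  have L: "fst L = 1 - x * u - a * v" "snd L = - (y * v)"
    using uv by (simp_all add: L_def gamma_map_def algebra_simps minus_equation_iff[of "snd _"])
  have xy: "x * y = 0" using ann_eq_principal_mult_eq_0[OF ann] .
  have "(x * fst L, x * snd L) = gamma_map x y a (1 - x * u, - x * v)"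
    using xy by (simp add: L gamma_map_def algebra_simps)
  then have "x * c b = 0" if "b \<in> S" for b
    using independent_coeffs_annihilated[OF indep S _ that] by (simp add: L_def G_mod_def)
  then have "c b \<in> ann x" if "b \<in> S" for b
    using that by (simp add: ann_def)
  then have "y dvd c b" if "b \<in> S" for b
    using that by (simp add: ann mem_principal_iff_dvd)
  then have "y dvd fst L"
    by (auto simp: L_def lin_comb_def intro!: dvd_sum)
  then obtain w where "fst L = y * w" by (rule dvdE)
  then have "1 = y * w + (x * u + a * v)"
    using L(1) by (simp add: algebra_simps)
  moreover have "\<not> is_unit (y * w + (x * u + a * v))"
    using assms by (intro local_ring_nonunit_add nonunit_mult) auto
  ultimately show False by (simp add: is_unit_def)
qed

theorem corollary3p9:
  fixes x y a :: "'a::comm_ring_1"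
  assumes "noetherian_ring TYPE('a)"
    and "local_ring TYPE('a)"
    and "exact_pair x y"
  shows "(is_unit a \<longrightarrow> quot_iso_ring (G_mod x y a) \<and> quot_iso_ring (H_mod x y a)) \<and>
         (\<not> is_unit a \<longrightarrow> \<not> quot_free (G_mod x y a) \<and> \<not> quot_free (H_mod x y a))"
proof -
  from \<open>exact_pair x y\<close> have ann: "ann x = principal y" "ann y = principal x"
    and nonunit: "\<not> is_unit x" "\<not> is_unit y"
    by (simp_all add: exact_pair_def)
  have unit_uminus: "is_unit (- a) \<longleftrightarrow> is_unit a"
    by (simp add: is_unit_def)
  show ?thesis
    unfolding H_mod_eq_G_mod
    using quot_iso_ring_G_mod[OF ann_eq_principal_mult_eq_0[OF ann(1)]]
      quot_iso_ring_G_mod[OF ann_eq_principal_mult_eq_0[OF ann(2)]]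
      not_quot_free_G_mod[OF \<open>local_ring TYPE('a)\<close> ann(1) nonunit]
      not_quot_free_G_mod[OF \<open>local_ring TYPE('a)\<close> ann(2) nonunit(2,1)]
    by (simp add: unit_uminus)
qed

end
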